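(* Let $n\ge 2$ be an integer, $\varepsilon\in(0,1]$, $\gamma>0$, and let $Q=2^q$ with $q\ge\max\{\log_2 n,\ \frac{4}{\gamma}\log_2\frac{3}{\varepsilon}\}$. Then with probability at least $3/4$, a random channel $W$ drawn from $\mathcal{W}_{Q,\varepsilon}$ satisfies $$\mathcal{R}^{(0)}_{W,n}\le 2q\left(1-\frac1n\right)(1+\gamma).$$ In particular, for $n=2$, $\mathcal{R}^{(0)}_{W,2}\le q(1+\gamma)$.
   Context: Fix an integer $q\ge1$, $Q=2^q$, $[Q]=\{1,\dots,Q\}$, and a symbol $\phi\notin[Q]$. A channel is a function $W=(W_1,W_2)$ with $W_i:[Q]^2\to\mathcal{O}$ for a finite output alphabet $\mathcal{O}$ (here $\mathcal{O}=[Q]\cup\{\phi\}$). For block length $n$, $W^{(n)}_i(x,y)=(W_i(x_1,y_1),\dots,W_i(x_n,y_n))$ for $x,y\in[Q]^n$. A code of block length $n$ with message sets $[M_1],[M_2]$ consists of encoders $E_i:[M_i]\to[Q]^n$ and decoders $D_i:\mathcal{O}^n\to[M_i]$; it succeeds on $(m_1,m_2)$ if $D_i(W^{(n)}_i(E_1(m_1),E_2(m_2)))=m_i$ for $i=1,2$. A rate pair $(R_1,R_2)$ is achievable with probability $1-\varepsilon$ and block length $n$ if, with $M_i=2^{R_in}$ (positive integers), some code succeeds with probability at least $1-\varepsilon$ for $(m_1,m_2)$ uniform on $[M_1]\times[M_2]$; $\mathcal{R}^{(\varepsilon)}_{W,n}$ is the supremum of $R_1+R_2$ over such pairs, $\mathcal{R}^{(\varepsilon)}_W=\sup_n\mathcal{R}^{(\varepsilon)}_{W,n}$;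 $\varepsilon=0$ means success on every message pair. $\mathcal{W}_{Q,\varepsilon}$ is the distribution over channels $W:[Q]^2\to([Q]\cup\{\phi\})^2$ in which, independently for every $(x,y)\in[Q]^2$, $W(x,y)=(\phi,\phi)$ with probability $\varepsilon$ and $W(x,y)=(x,y)$ otherwise. Logarithms are base 2. *)

theory Defs
  imports "HOL-Probability.Probability"
begin

text \<open>Inputs are [Q] = {1..Q}; outputs are \<open>nat option\<close>, with \<open>None\<close> playing the
  role of the erasure symbol phi.  A channel is \<open>W :: nat \<Rightarrow> nat \<Rightarrow> 'o \<times> 'o\<close>,
  \<open>fst (W x y)\<close> = W_1(x,y), \<open>snd (W x y)\<close> = W_2(x,y).\<close>

definition channel_out :: "(nat \<Rightarrow> nat \<Rightarrow> 'o \<times> 'o) \<Rightarrow> nat list \<Rightarrow> nat list \<Rightarrow> 'o list \<times> 'o list" where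
  "channel_out W x y = (map (\<lambda>(a,b). fst (W a b)) (zip x y), map (\<lambda>(a,b). snd (W a b)) (zip x y))"

definition zero_error_code ::
  "nat \<Rightarrow> nat \<Rightarrow> (nat \<Rightarrow> nat \<Rightarrow> 'o \<times> 'o) \<Rightarrow> nat \<Rightarrow> nat \<Rightarrow> bool" where
  "zero_error_code Q n W M1 M2 \<longleftrightarrow>
     (\<exists>(E1 :: nat \<Rightarrow> nat list) (E2 :: nat \<Rightarrow> nat list) (D1 :: 'o list \<Rightarrow> nat) (D2 :: 'o list \<Rightarrow> nat).
        (\<forall>m\<in>{1..M1}. length (E1 m) = n \<and> set (E1 m) \<subseteq> {1..Q}) \<and>
        (\<forall>m\<in>{1..M2}. length (E2 m) = n \<and> set (E2 m) \<subseteq> {1..Q}) \<and>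
        (\<forall>w. D1 w \<in> {1..M1}) \<and> (\<forall>w. D2 w \<in> {1..M2}) \<and>
        (\<forall>m1\<in>{1..M1}. \<forall>m2\<in>{1..M2}.
           D1 (fst (channel_out W (E1 m1) (E2 m2))) = m1 \<and>
           D2 (snd (channel_out W (E1 m1) (E2 m2))) = m2))"

definition zero_error_rate :: "nat \<Rightarrow> nat \<Rightarrow> (nat \<Rightarrow> nat \<Rightarrow> 'o \<times> 'o) \<Rightarrow> real" where
  "zero_error_rate Q n W =
     Sup {(log 2 (real M1) + log 2 (real M2)) / real n | M1 M2.
            M1 \<ge> 1 \<and> M2 \<ge> 1 \<and> zero_error_code Q n W M1 M2}"

definition erasure_channel :: "(nat \<times> nat \<Rightarrow> bool) \<Rightarrow> nat \<Rightarrow> nat \<Rightarrow> nat option \<times> nat option" where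
  "erasure_channel e x y = (if e (x, y) then (None, None) else (Some x, Some y))"

definition erasure_pattern_pmf :: "nat \<Rightarrow> real \<Rightarrow> (nat \<times> nat \<Rightarrow> bool) pmf" where
  "erasure_pattern_pmf Q eps = Pi_pmf ({1..Q} \<times> {1..Q}) False (\<lambda>_. bernoulli_pmf eps)"

end

theory Submission
  imports Defs
begin

text \<open>Call an erasure pattern good if every all-unerased rectangle \<open>R \<times> F\<close> in \<open>[Q]\<^sup>2\<close> has
  area below \<open>T \<approx> 2Q/\<epsilon>\<close>; a union bound over the \<open>4\<^sup>Q\<close> rectangles shows that a random pattern
  is good with probability at least \<open>3/4\<close>.  For a good pattern, look at the first two coordinates
  of a zero-error code with codebooks \<open>A\<close>, \<open>B\<close>.  Fix all symbols of a codeword of user 1 except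
  the first: if two choices of the first symbol were both erased against the first symbol of some
  codeword of user 2, user 1 could not tell them apart.  So each such fibre meets every row of
  first symbols of \<open>B\<close> in at most one erasure, and goodness makes the fibre times the number of
  those rows at most \<open>4T + Q\<close>.  Doing the same for user 2 in the second coordinate and multiplying
  gives \<open>|A| |B| \<le> (4T + Q)\<^sup>2 Q^(2(n - 2))\<close>, and \<open>log (4T + Q) \<le> q (1 + \<gamma>)\<close> by the assumption
  on \<open>q\<close>.\<close>

definition words :: "nat \<Rightarrow> nat \<Rightarrow> nat list set" where
  "words Q n = {xs. set xs \<subseteq> {1..Q} \<and> length xs = n}"

lemma finite_words: "finite (words Q n)"
  by (simp add: words_def finite_lists_length_eq)

lemma card_words: "card (words Q n) = Q ^ n"
  using card_lists_length_eq[of "{1..Q}" n] by (simp add: words_def)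

lemma drop_in_words: "x \<in> words Q n \<Longrightarrow> drop k x \<in> words Q (n - k)"
  by (auto simp: words_def dest: in_set_dropD)

lemma words_two_or_more_cases:
  assumes "x \<in> words Q n" and "n \<ge> 2"
  obtains a b z where "x = a # b # z" "a \<in> {1..Q}" "b \<in> {1..Q}" "z \<in> words Q (n - 2)"
  using assms by (cases x rule: remdups_adj.cases) (auto simp: words_def)

definition small_unerased_rectangles :: "nat \<Rightarrow> nat \<Rightarrow> (nat \<times> nat \<Rightarrow> bool) \<Rightarrow> bool" where
  "small_unerased_rectangles Q T e \<longleftrightarrow>
     (\<forall>R F. R \<subseteq> {1..Q} \<longrightarrow> F \<subseteq> {1..Q} \<longrightarrow> (\<forall>r\<in>R. \<forall>c\<in>F. \<not> e (r, c)) \<longrightarrow> card R * card F < T)"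

lemma small_unerased_rectangles_swap:
  "small_unerased_rectangles Q T e \<Longrightarrow> small_unerased_rectangles Q T (e \<circ> prod.swap)"
  unfolding small_unerased_rectangles_def by (metis comp_apply mult.commute swap_simp)

section \<open>Counting\<close>

lemma card_mult_le_if_one_erasure_per_row:
  assumes small: "small_unerased_rectangles Q T e"
    and R: "R \<subseteq> {1..Q}" and V: "V \<subseteq> {1..Q}"
    and one: "\<And>r v v'. r \<in> R \<Longrightarrow> v \<in> V \<Longrightarrow> v' \<in> V \<Longrightarrow> e (r, v) \<Longrightarrow> e (r, v') \<Longrightarrow> v = v'"
  shows "card R * card V \<le> 4 * T + Q"
proof -
  have finV: "finite V" and finR: "finite R" using R V finite_subset by auto
  obtain V2 where V2: "V2 \<subseteq> V" "card V2 = card V div 2"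
    using obtain_subset_with_card_n[of "card V div 2" V] by auto
  define V1 where "V1 = V - V2"
  have "card V1 = card V - card V div 2"
    unfolding V1_def using V2 finV by (simp add: card_Diff_subset finite_subset)
  hence V21: "card V2 \<le> card V1" and cardV: "card V \<le> 2 * card V2 + 1" using V2 by auto
  define C where "C = (\<lambda>W. {r\<in>R. \<forall>v\<in>W. \<not> e (r, v)})"
  have cover: "R \<subseteq> C V1 \<union> C V2"
  proof
    fix r assume r: "r \<in> R"
    \<comment> \<open>A row with at most one erasure in \<open>V\<close> is unerased on one of the two halves.\<close>
    show "r \<in> C V1 \<union> C V2"
    proof (rule ccontr)
      assume "r \<notin> C V1 \<union> C V2"
      then obtain v1 v2 where "v1 \<in> V1" "v2 \<in> V2" "e (r, v1)" "e (r, v2)"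
        using r unfolding C_def by auto
      with one[OF r] V2(1) show False unfolding V1_def by blast
    qed
  qed
  have rect: "card (C W) * card W < T" if "W \<subseteq> V" for W
  proof (rule small[unfolded small_unerased_rectangles_def, rule_format])
    show "C W \<subseteq> {1..Q}" using R by (auto simp: C_def)
    show "W \<subseteq> {1..Q}" using that V by auto
  qed (simp add: C_def)
  have "card R \<le> card (C V1 \<union> C V2)"
    by (rule card_mono) (use cover finR in \<open>auto simp: C_def\<close>)
  also have "\<dots> \<le> card (C V1) + card (C V2)" by (rule card_Un_le)
  finally have "card R * card V2 \<le> card (C V1) * card V2 + card (C V2) * card V2"
    by (metis add_mult_distrib mult_le_mono1)
  also have "\<dots> \<le> card (C V1) * card V1 + card (C V2) * card V2"
    using mult_le_mono2[OF V21] by simp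
  also have "\<dots> \<le> 2 * T"
    using rect[of V1] rect[OF V2(1)] unfolding V1_def by simp
  finally have "card R * card V2 \<le> 2 * T" .
  moreover have "card R \<le> Q" using card_mono[OF _ R] by simp
  moreover have "card R * card V \<le> 2 * (card R * card V2) + card R"
    using mult_le_mono2[OF cardV, of "card R"] by (simp add: algebra_simps)
  ultimately show ?thesis by linarith
qed

lemma card_mult_le_of_fibres:
  assumes "finite A" and "\<And>p. card {x\<in>A. h x = p} * s \<le> U"
  shows "card A * s \<le> U * card (h ` A)"
proof -
  have "card A = (\<Sum>p\<in>h ` A. card {x\<in>A. h x = p})"
    using sum.group[OF assms(1) finite_imageI[OF assms(1)] subset_refl, of "\<lambda>_. 1::nat" h]
    by simp
  hence "card A * s = (\<Sum>p\<in>h ` A. card {x\<in>A. h x = p} * s)"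
    by (simp add: sum_distrib_right)
  also have "\<dots> \<le> U * card (h ` A)"
    using sum_mono[of "h ` A" "\<lambda>p. card {x\<in>A. h x = p} * s" "\<lambda>_. U"] assms(2)
    by (simp add: mult.commute)
  finally show ?thesis .
qed

lemma card_mult_le_card_keys:
  fixes key :: "'a \<Rightarrow> 'b" and sym :: "'a \<Rightarrow> nat"
  assumes small: "small_unerased_rectangles Q T e"
    and A: "finite A" "sym ` A \<subseteq> {1..Q}" and S: "S \<subseteq> {1..Q}"
    and determined: "\<And>x x'. x \<in> A \<Longrightarrow> x' \<in> A \<Longrightarrow> key x = key x' \<Longrightarrow> sym x = sym x' \<Longrightarrow> x = x'"
    and one: "\<And>r x x'. r \<in> S \<Longrightarrow> x \<in> A \<Longrightarrow> x' \<in> A \<Longrightarrow> key x = key x' \<Longrightarrow>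
                e (r, sym x) \<Longrightarrow> e (r, sym x') \<Longrightarrow> sym x = sym x'"
  shows "card A * card S \<le> (4 * T + Q) * card (key ` A)"
proof (rule card_mult_le_of_fibres[OF A(1)])
  fix p
  define F where "F = {x\<in>A. key x = p}"
  have "inj_on sym F" using determined by (auto simp: F_def intro: inj_onI)
  moreover have "card S * card (sym ` F) \<le> 4 * T + Q"
    by (rule card_mult_le_if_one_erasure_per_row[OF small S]) (use A one in \<open>auto simp: F_def\<close>)
  ultimately show "card F * card S \<le> 4 * T + Q" by (simp add: card_image mult.commute)
qed

section \<open>Zero-error codes for an erasure channel\<close>

lemma channel_out_Cons:
  "channel_out W (a # x) (b # y) =
     (fst (W a b) # fst (channel_out W x y), snd (W a b) # snd (channel_out W x y))"
  by (simp add: channel_out_def)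

lemma zero_error_code_one_one:
  fixes W :: "nat \<Rightarrow> nat \<Rightarrow> 'o \<times> 'o"
  assumes "Q \<ge> 1"
  shows "zero_error_code Q n W 1 1"
  unfolding zero_error_code_def
  by (intro exI[of _ "\<lambda>_. replicate n (1::nat)"] exI[of _ "\<lambda>_ :: 'o list. 1::nat"])
    (use assms in auto)

locale separating_codebooks =
  fixes Q n :: nat and W :: "nat \<Rightarrow> nat \<Rightarrow> 'o \<times> 'o" and A B :: "nat list set"
  assumes A: "A \<subseteq> words Q n" and B: "B \<subseteq> words Q n"
    and decode1: "\<And>x x' y. x \<in> A \<Longrightarrow> x' \<in> A \<Longrightarrow> y \<in> B \<Longrightarrow>
      fst (channel_out W x y) = fst (channel_out W x' y) \<Longrightarrow> x = x'"
    and decode2: "\<And>x y y'. x \<in> A \<Longrightarrow> y \<in> B \<Longrightarrow> y' \<in> B \<Longrightarrow>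
      snd (channel_out W x y) = snd (channel_out W x y') \<Longrightarrow> y = y'"

lemma zero_error_code_codebooks:
  assumes "zero_error_code Q n W M1 M2" and "M1 \<ge> 1" and "M2 \<ge> 1"
  obtains A B where "card A = M1" "card B = M2" "separating_codebooks Q n W A B"
proof -
  obtain E1 E2 D1 D2 where
    E1: "\<forall>m\<in>{1..M1}. length (E1 m) = n \<and> set (E1 m) \<subseteq> {1..Q}" and
    E2: "\<forall>m\<in>{1..M2}. length (E2 m) = n \<and> set (E2 m) \<subseteq> {1..Q}" and
    D: "\<forall>m1\<in>{1..M1}. \<forall>m2\<in>{1..M2}. D1 (fst (channel_out W (E1 m1) (E2 m2))) = m1 \<and>
           D2 (snd (channel_out W (E1 m1) (E2 m2))) = m2"
    using assms(1) unfolding zero_error_code_def by blast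
  define A B where "A = E1 ` {1..M1}" and "B = E2 ` {1..M2}"
  have "inj_on E1 {1..M1}" "inj_on E2 {1..M2}"
    using D assms(2,3) by (metis atLeastAtMost_iff inj_onI le_refl)+
  then have "card A = M1" "card B = M2" by (simp_all add: A_def B_def card_image)
  moreover have "separating_codebooks Q n W A B"
  proof
    show "A \<subseteq> words Q n" "B \<subseteq> words Q n"
      using E1 E2 by (auto simp: A_def B_def words_def)
    show "x = x'" if mem: "x \<in> A" "x' \<in> A" "y \<in> B"
      and out: "fst (channel_out W x y) = fst (channel_out W x' y)" for x x' y
    proof -
      obtain m m' k where "m \<in> {1..M1}" "m' \<in> {1..M1}" "k \<in> {1..M2}"
        and "x = E1 m" "x' = E1 m'" "y = E2 k"
        using mem unfolding A_def B_def by blast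
      with D have "D1 (fst (channel_out W x y)) = m" "D1 (fst (channel_out W x' y)) = m'" by simp_all
      with out have "m = m'" by simp
      with \<open>x = E1 m\<close> \<open>x' = E1 m'\<close> show ?thesis by simp
    qed
    show "y = y'" if mem: "x \<in> A" "y \<in> B" "y' \<in> B"
      and out: "snd (channel_out W x y) = snd (channel_out W x y')" for x y y'
    proof -
      obtain m k k' where "m \<in> {1..M1}" "k \<in> {1..M2}" "k' \<in> {1..M2}"
        and "x = E1 m" "y = E2 k" "y' = E2 k'"
        using mem unfolding A_def B_def by blast
      with D have "D2 (snd (channel_out W x y)) = k" "D2 (snd (channel_out W x y')) = k'" by simp_all
      with out have "k = k'" by simp
      with \<open>y = E2 k\<close> \<open>y' = E2 k'\<close> show ?thesis by simp
    qed
  qed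
  ultimately show ?thesis using that by blast
qed

locale erasure_codebooks = separating_codebooks Q n "erasure_channel e" A B
  for Q n :: nat and e :: "nat \<times> nat \<Rightarrow> bool" and A B :: "nat list set" +
  fixes T :: nat
  assumes small: "small_unerased_rectangles Q T e" and n: "n \<ge> 2"
begin

abbreviation firsts :: "nat list set \<Rightarrow> nat set" where "firsts X \<equiv> (\<lambda>x. x ! 0) ` X"
abbreviation seconds :: "nat list set \<Rightarrow> nat set" where "seconds X \<equiv> (\<lambda>x. x ! 1) ` X"

lemma finite_codebooks: "finite A" "finite B"
  using finite_subset[OF A finite_words] finite_subset[OF B finite_words] .

lemma codeword1E:
  assumes "x \<in> A"
  obtains a b z where "x = a # b # z" "a \<in> {1..Q}" "b \<in> {1..Q}" "z \<in> words Q (n - 2)"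
  using assms A n words_two_or_more_cases by blast

lemma codeword2E:
  assumes "y \<in> B"
  obtains a b z where "y = a # b # z" "a \<in> {1..Q}" "b \<in> {1..Q}" "z \<in> words Q (n - 2)"
  using assms B n words_two_or_more_cases by blast

lemma card_codebook1: "card A * card (firsts B) \<le> (4 * T + Q) * (card (seconds A) * Q ^ (n - 2))"
proof -
  let ?key = "\<lambda>x. (x ! 1, drop 2 x)"
  have "card A * card (firsts B) \<le> (4 * T + Q) * card (?key ` A)"
  proof (rule card_mult_le_card_keys[OF small_unerased_rectangles_swap[OF small] finite_codebooks(1)])
    show "firsts A \<subseteq> {1..Q}" "firsts B \<subseteq> {1..Q}"
      by (auto elim!: codeword1E codeword2E)
    show "x = x'" if "x \<in> A" "x' \<in> A" "?key x = ?key x'" "x ! 0 = x' ! 0" for x x'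
      using that by (auto elim!: codeword1E)
    show "x ! 0 = x' ! 0" if r: "r \<in> firsts B" and x: "x \<in> A" "x' \<in> A" "?key x = ?key x'"
      and erased: "(e \<circ> prod.swap) (r, x ! 0)" "(e \<circ> prod.swap) (r, x' ! 0)" for r x x'
    proof -
      obtain y where y: "y \<in> B" "y ! 0 = r" using r by blast
      with x erased have "channel_out (erasure_channel e) x y = channel_out (erasure_channel e) x' y"
        by (auto elim!: codeword1E codeword2E simp: channel_out_Cons erasure_channel_def)
      with decode1 x(1,2) y(1) show ?thesis by metis
    qed
  qed
  also have "card (?key ` A) \<le> card (seconds A \<times> words Q (n - 2))"
    using A drop_in_words by (intro card_mono) (auto simp: finite_codebooks finite_words)
  finally show ?thesis by (simp add: card_cartesian_product card_words)
qed

lemma card_codebook2: "card B * card (seconds A) \<le> (4 * T + Q) * (card (firsts B) * Q ^ (n - 2))"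
proof -
  let ?key = "\<lambda>y. (y ! 0, drop 2 y)"
  have "card B * card (seconds A) \<le> (4 * T + Q) * card (?key ` B)"
  proof (rule card_mult_le_card_keys[OF small finite_codebooks(2)])
    show "seconds B \<subseteq> {1..Q}" "seconds A \<subseteq> {1..Q}"
      by (auto elim!: codeword1E codeword2E)
    show "y = y'" if "y \<in> B" "y' \<in> B" "?key y = ?key y'" "y ! 1 = y' ! 1" for y y'
      using that by (auto elim!: codeword2E)
    show "y ! 1 = y' ! 1" if r: "r \<in> seconds A" and y: "y \<in> B" "y' \<in> B" "?key y = ?key y'"
      and erased: "e (r, y ! 1)" "e (r, y' ! 1)" for r y y'
    proof -
      obtain x where x: "x \<in> A" "x ! 1 = r" using r by blast
      with y erased have "channel_out (erasure_channel e) x y = channel_out (erasure_channel e) x y'"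
        by (auto elim!: codeword1E codeword2E simp: channel_out_Cons erasure_channel_def)
      with decode2 y(1,2) x(1) show ?thesis by metis
    qed
  qed
  also have "card (?key ` B) \<le> card (firsts B \<times> words Q (n - 2))"
    using B drop_in_words by (intro card_mono) (auto simp: finite_codebooks finite_words)
  finally show ?thesis by (simp add: card_cartesian_product card_words)
qed

lemma card_codebooks: "card A * card B \<le> (4 * T + Q)^2 * Q ^ (2 * (n - 2))"
proof (cases "A = {} \<or> B = {}")
  case True
  then show ?thesis by auto
next
  case False
  let ?U = "4 * T + Q" and ?L = "Q ^ (n - 2)" and ?S = "card (firsts B) * card (seconds A)"
  have "?S > 0" using False finite_codebooks by (auto simp: card_gt_0_iff)
  have L2: "Q ^ (2 * (n - 2)) = ?L * ?L" by (simp add: mult_2 power_add)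
  have "(card A * card B) * ?S = (card A * card (firsts B)) * (card B * card (seconds A))"
    by (simp add: algebra_simps)
  also have "\<dots> \<le> (?U * (card (seconds A) * ?L)) * (?U * (card (firsts B) * ?L))"
    by (rule mult_le_mono[OF card_codebook1 card_codebook2])
  also have "\<dots> = (?U^2 * Q ^ (2 * (n - 2))) * ?S"
    unfolding L2 power2_eq_square by (simp add: ac_simps)
  finally show ?thesis using \<open>?S > 0\<close> by simp
qed

end

lemma zero_error_code_erasure_card_bound:
  assumes "small_unerased_rectangles Q T e" and "n \<ge> 2"
    and "zero_error_code Q n (erasure_channel e) M1 M2" and "M1 \<ge> 1" and "M2 \<ge> 1"
  shows "M1 * M2 \<le> (4 * T + Q)^2 * Q ^ (2 * (n - 2))"
proof -
  obtain A B where card: "card A = M1" "card B = M2"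
    and sep: "separating_codebooks Q n (erasure_channel e) A B"
    using zero_error_code_codebooks[OF assms(3-5)] .
  interpret erasure_codebooks Q n e A B T
    by (intro erasure_codebooks.intro erasure_codebooks_axioms.intro sep assms(1,2))
  show ?thesis using card_codebooks card by simp
qed

lemma zero_error_rate_le:
  fixes W :: "nat \<Rightarrow> nat \<Rightarrow> 'o \<times> 'o"
  assumes "Q \<ge> 1"
    and bound: "\<And>M1 M2. M1 \<ge> 1 \<Longrightarrow> M2 \<ge> 1 \<Longrightarrow> zero_error_code Q n W M1 M2 \<Longrightarrow> M1 * M2 \<le> K"
  shows "zero_error_rate Q n W \<le> log 2 K / n"
proof -
  let ?S = "{(log 2 (real M1) + log 2 (real M2)) / real n | M1 M2.
              M1 \<ge> 1 \<and> M2 \<ge> 1 \<and> zero_error_code Q n W M1 M2}"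
  have "?S \<noteq> {}" using zero_error_code_one_one[OF assms(1)] by blast
  moreover have "x \<le> log 2 K / n" if "x \<in> ?S" for x
  proof -
    obtain M1 M2 where x: "x = (log 2 (real M1) + log 2 (real M2)) / real n"
      and M: "M1 \<ge> 1" "M2 \<ge> 1" and code: "zero_error_code Q n W M1 M2"
      using \<open>x \<in> ?S\<close> by blast
    have "real (M1 * M2) \<le> real K" using bound[OF M code] by (simp only: of_nat_le_iff)
    have "log 2 M1 + log 2 M2 = log 2 (M1 * M2)" using M by (simp add: log_mult)
    also have "\<dots> \<le> log 2 K" using \<open>real (M1 * M2) \<le> real K\<close> M by (intro log_mono) simp_all
    finally show ?thesis unfolding x by (simp add: divide_right_mono)
  qed
  ultimately show ?thesis unfolding zero_error_rate_def by (rule cSup_least)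
qed

lemma zero_error_rate_erasure_le:
  assumes "small_unerased_rectangles Q T e" and "n \<ge> 2" and "Q \<ge> 1"
  shows "zero_error_rate Q n (erasure_channel e) \<le> log 2 (real ((4 * T + Q)\<^sup>2 * Q ^ (2 * (n - 2)))) / n"
  using zero_error_code_erasure_card_bound[OF assms(1,2)] assms(3) by (intro zero_error_rate_le) auto

section \<open>Random erasure patterns\<close>

lemma prob_unerased_rectangle:
  assumes "R \<subseteq> {1..Q}" "F \<subseteq> {1..Q}" "0 \<le> eps" "eps \<le> 1"
  shows "measure_pmf.prob (erasure_pattern_pmf Q eps) {e. \<forall>r\<in>R. \<forall>c\<in>F. \<not> e (r, c)}
         = (1 - eps) ^ (card R * card F)"
proof -
  define I where "I = {1..Q} \<times> {1..Q}"
  define B where "B = (\<lambda>x::nat \<times> nat. if x \<in> R \<times> F then {False} else (UNIV :: bool set))"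
  have "{e. \<forall>r\<in>R. \<forall>c\<in>F. \<not> e (r, c)} = Pi I B"
    using assms(1,2) unfolding I_def B_def Pi_def by (auto; meson atLeastAtMost_iff subsetD)
  hence "measure_pmf.prob (erasure_pattern_pmf Q eps) {e. \<forall>r\<in>R. \<forall>c\<in>F. \<not> e (r, c)}
      = (\<Prod>x\<in>I. measure_pmf.prob (bernoulli_pmf eps) (B x))"
    unfolding erasure_pattern_pmf_def I_def by (simp add: measure_Pi_pmf_Pi)
  also have "\<dots> = (\<Prod>x\<in>I. if x \<in> R \<times> F then 1 - eps else 1)"
    by (rule prod.cong) (use assms(3,4) in \<open>auto simp: B_def measure_pmf_single\<close>)
  also have "\<dots> = (1 - eps) ^ card (I \<inter> R \<times> F)"
    by (simp add: prod.If_cases I_def)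
  also have "I \<inter> R \<times> F = R \<times> F" using assms(1,2) I_def by auto
  finally show ?thesis by (simp add: card_cartesian_product)
qed

lemma prob_small_unerased_rectangles:
  fixes eps :: real
  assumes "0 \<le> eps" and "eps \<le> 1"
  shows "measure_pmf.prob (erasure_pattern_pmf Q eps) {e. small_unerased_rectangles Q T e}
         \<ge> 1 - 4 ^ Q * (1 - eps) ^ T"
proof -
  define P where "P = {(R, F). R \<subseteq> {1..Q} \<and> F \<subseteq> {1..Q} \<and> T \<le> card R * card F}"
  define Ev where "Ev = (\<lambda>(R :: nat set, F :: nat set). {e. \<forall>r\<in>R. \<forall>c\<in>F. \<not> e (r, c)})"
  have "P \<subseteq> Pow {1..Q} \<times> Pow {1..Q}" by (auto simp: P_def)
  hence finP: "finite P" and cardP: "card P \<le> 2 ^ Q * 2 ^ Q"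
    using card_mono[of "Pow {1..Q} \<times> Pow {1..Q}" P]
    by (auto simp: finite_subset card_cartesian_product card_Pow)
  have "{e. \<not> small_unerased_rectangles Q T e} = (\<Union>RF\<in>P. Ev RF)"
    unfolding small_unerased_rectangles_def P_def Ev_def by (auto simp: not_less)
  hence "measure_pmf.prob (erasure_pattern_pmf Q eps) {e. \<not> small_unerased_rectangles Q T e}
        \<le> (\<Sum>RF\<in>P. measure_pmf.prob (erasure_pattern_pmf Q eps) (Ev RF))"
    using measure_pmf.finite_measure_subadditive_finite[OF finP] by simp
  also have "\<dots> \<le> (\<Sum>RF\<in>P. (1 - eps) ^ T)"
  proof (rule sum_mono)
    fix RF assume "RF \<in> P"
    then obtain R F where RF: "RF = (R, F)" "R \<subseteq> {1..Q}" "F \<subseteq> {1..Q}" "T \<le> card R * card F"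
      by (auto simp: P_def)
    then show "measure_pmf.prob (erasure_pattern_pmf Q eps) (Ev RF) \<le> (1 - eps) ^ T"
      using prob_unerased_rectangle[OF RF(2,3) assms] assms
      by (simp add: Ev_def power_decreasing)
  qed
  also have "\<dots> \<le> 4 ^ Q * (1 - eps) ^ T"
  proof -
    have "real (card P) \<le> 4 ^ Q"
      using cardP by (simp add: power_mult_distrib[symmetric])
    thus ?thesis using assms by (simp add: mult_right_mono)
  qed
  finally show ?thesis
    using measure_pmf.prob_compl[of "{e. \<not> small_unerased_rectangles Q T e}" "erasure_pattern_pmf Q eps"]
    by (simp add: Compl_eq_Diff_UNIV[symmetric] Collect_neg_eq[symmetric])
qed

lemma one_minus_power_ceiling_inverse_le_half:
  fixes eps :: real
  assumes "0 < eps" and "eps \<le> 1"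
  shows "(1 - eps) ^ nat \<lceil>1 / eps\<rceil> \<le> 1 / 2"
proof -
  define m where "m = nat \<lceil>1 / eps\<rceil>"
  have "real m \<ge> 1 / eps" unfolding m_def using assms by linarith
  hence "real m * eps \<ge> 1" using mult_right_mono[of "1 / eps" "real m" eps] assms by simp
  have "(1 - eps) ^ m \<le> exp (- eps) ^ m"
    by (rule power_mono) (use exp_ge_add_one_self[of "- eps"] assms in auto)
  also have "\<dots> = exp (- (real m * eps))" by (simp add: exp_of_nat_mult[symmetric])
  also have "\<dots> \<le> exp (- 1)" using \<open>real m * eps \<ge> 1\<close> by simp
  also have "\<dots> \<le> 1 / 2"
    using exp_ge_add_one_self[of 1] by (simp add: exp_minus field_simps)
  finally show ?thesis unfolding m_def .
qed

lemma exists_rectangle_threshold: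
  fixes eps :: real and Q :: nat
  assumes "0 < eps" and "eps \<le> 1" and "Q \<ge> 2"
  obtains T :: nat where "4 ^ Q * (1 - eps) ^ T \<le> 1 / 4" and "real (4 * T + Q) \<le> 25 * Q / eps"
proof
  define m where "m = nat \<lceil>1 / eps\<rceil>"
  have "(1 - eps) ^ (m * (2 * Q + 2)) = ((1 - eps) ^ m) ^ (2 * Q + 2)" by (rule power_mult)
  also have "\<dots> \<le> (1 / 2) ^ (2 * Q + 2)"
    using one_minus_power_ceiling_inverse_le_half[OF assms(1,2)] assms
    by (intro power_mono) (simp_all add: m_def)
  finally have "(1 - eps) ^ (m * (2 * Q + 2)) \<le> (1 / 2) ^ (2 * Q + 2)" .
  hence "4 ^ Q * (1 - eps) ^ (m * (2 * Q + 2)) \<le> 4 ^ Q * (1 / 2) ^ (2 * Q + 2)"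
    by (rule mult_left_mono) simp
  also have "\<dots> = 1 / 4" by (simp add: power_add power_mult power_one_over)
  finally show "4 ^ Q * (1 - eps) ^ (m * (2 * Q + 2)) \<le> 1 / 4" .
  have "real m \<le> 1 / eps + 1"
    unfolding m_def using assms(1) of_int_ceiling_le_add_one[of "1 / eps"] by simp
  also have "\<dots> \<le> 2 / eps" using assms(1,2) by (simp add: field_simps)
  finally have "real (m * (2 * Q + 2)) \<le> 2 / eps * (3 * Q)"
    using assms(1,3) by (simp only: of_nat_mult) (rule mult_mono, auto)
  moreover have "real Q \<le> Q / eps" using assms(1,2) by (simp add: field_simps mult_left_le_one_le)
  ultimately show "real (4 * (m * (2 * Q + 2)) + Q) \<le> 25 * Q / eps" by simp
qed

section \<open>Arithmetic of the rate bound\<close>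

lemma two_powr_ge_threshold:
  fixes q :: nat and eps gamma :: real
  assumes "0 < eps" "eps \<le> 1" "gamma > 0" "real q \<ge> (4 / gamma) * log 2 (3 / eps)"
  shows "25 * 2 ^ q / eps \<le> 2 powr (q * (1 + gamma))"
proof -
  have "81 / eps = 3 ^ 3 * (3 / eps)" by simp
  also have "\<dots> \<le> (3 / eps) ^ 3 * (3 / eps)"
    using assms(1,2) by (intro mult_right_mono power_mono) (simp_all add: field_simps)
  also have "\<dots> = (3 / eps) powr 4"
    using assms(1) by (simp add: powr_realpow eval_nat_numeral)
  also have "\<dots> = 2 powr (4 * log 2 (3 / eps))"
    using assms(1) by (simp add: powr_powr[symmetric] mult.commute[of 4])
  also have "\<dots> \<le> 2 powr (q * gamma)"
    using assms(3,4) by (simp add: field_simps)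
  finally have "81 / eps \<le> 2 powr (q * gamma)" .
  moreover have "25 / eps \<le> 81 / eps" using assms(1) by (simp add: divide_right_mono)
  ultimately have "25 / eps \<le> 2 powr (q * gamma)" by linarith
  hence "2 ^ q * (25 / eps) \<le> 2 ^ q * 2 powr (q * gamma)" by (rule mult_left_mono) simp
  thus ?thesis by (simp add: powr_realpow[symmetric] powr_add[symmetric] algebra_simps)
qed

lemma log_rate_le:
  fixes U n q :: nat and gamma :: real
  assumes "U \<ge> 1" "real U \<le> 2 powr (q * (1 + gamma))" "n \<ge> 2" "gamma \<ge> 0"
  shows "log 2 (real (U\<^sup>2 * (2 ^ q) ^ (2 * (n - 2)))) / n \<le> 2 * real q * (1 - 1 / n) * (1 + gamma)"
proof -
  have "log 2 U \<le> q * (1 + gamma)"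
    using assms(1,2) by (subst log_le_iff) auto
  have "log 2 (real (U\<^sup>2 * (2 ^ q) ^ (2 * (n - 2)))) = 2 * log 2 U + 2 * (real n - 2) * q"
    using assms(1,3) by (simp add: log_mult log_nat_power power_mult[symmetric] of_nat_diff)
  also have "\<dots> \<le> 2 * q * (1 + gamma) + 2 * (real n - 2) * q * (1 + gamma)"
  proof -
    have "0 \<le> (real n - 2) * q * gamma" using assms(3,4) by simp
    with \<open>log 2 U \<le> _\<close> show ?thesis by (simp add: algebra_simps)
  qed
  also have "\<dots> = 2 * real q * (1 - 1 / n) * (1 + gamma) * n"
    using assms(3) by (simp add: field_simps)
  finally show ?thesis using assms(3) by (simp add: divide_le_eq)
qed

theorem theorem1:
  fixes n q :: nat and eps gamma :: real
  assumes "n \<ge> 2" and "0 < eps" and "eps \<le> 1" and "gamma > 0" and "q \<ge> 1"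
    and "real q \<ge> log 2 (real n)"
    and "real q \<ge> (4 / gamma) * log 2 (3 / eps)"
  shows "measure_pmf.prob (erasure_pattern_pmf (2 ^ q) eps)
           {e. zero_error_rate (2 ^ q) n (erasure_channel e)
                 \<le> 2 * real q * (1 - 1 / real n) * (1 + gamma)} \<ge> 3 / 4"
proof -
  define Q :: nat where "Q = 2 ^ q"
  define bound where "bound = 2 * real q * (1 - 1 / real n) * (1 + gamma)"
  have "Q \<ge> 2" using assms(5) by (simp add: Q_def self_le_power)
  then obtain T where bad: "4 ^ Q * (1 - eps) ^ T \<le> 1 / 4" and U: "real (4 * T + Q) \<le> 25 * Q / eps"
    using exists_rectangle_threshold[OF assms(2,3)] by blast
  have U2: "real (4 * T + 2 ^ q) \<le> 2 powr (q * (1 + gamma))"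
    using U two_powr_ge_threshold[OF assms(2,3,4,7)] by (simp add: Q_def)
  have "zero_error_rate Q n (erasure_channel e) \<le> bound" if "small_unerased_rectangles Q T e" for e
  proof -
    have "zero_error_rate Q n (erasure_channel e) \<le> log 2 (real ((4 * T + Q)\<^sup>2 * Q ^ (2 * (n - 2)))) / n"
      using zero_error_rate_erasure_le[OF that assms(1)] \<open>Q \<ge> 2\<close> by simp
    also have "\<dots> \<le> bound"
      unfolding bound_def Q_def by (rule log_rate_le) (use U2 assms \<open>Q \<ge> 2\<close>[unfolded Q_def] in auto)
    finally show ?thesis .
  qed
  then have "measure_pmf.prob (erasure_pattern_pmf Q eps) {e. small_unerased_rectangles Q T e}
      \<le> measure_pmf.prob (erasure_pattern_pmf Q eps) {e. zero_error_rate Q n (erasure_channel e) \<le> bound}"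
    by (intro measure_pmf.finite_measure_mono) auto
  moreover have "measure_pmf.prob (erasure_pattern_pmf Q eps) {e. small_unerased_rectangles Q T e} \<ge> 3 / 4"
    using prob_small_unerased_rectangles[of eps Q T] bad assms(2,3) by simp
  ultimately show ?thesis unfolding Q_def bound_def by linarith
qed

end
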